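(* Let $\tilde L$ be a minimum-size counterexample. Then $\tilde L$ contains at most one doubly irreducible element.
   Context: For a poset $P$, $x$ upper covers $y$ (and $y$ lower covers $x$) if $y<x$ with nothing strictly between. Join-irreducible: upper covers exactly one element; meet-irreducible: lower covers exactly one element; doubly irreducible: both. For $x\in P$, ${\uparrow}x=\{y: x\le y\}$. A counterexample is a finite lattice $L$ with $|L|>1$ in which every join-irreducible $j$ satisfies $|{\uparrow}j|>|L|/2$; a minimum-size counterexample is a counterexample $\tilde L$ such that no counterexample has fewer elements. *)

theory Defs
  imports "HOL-Algebra.Lattice"
begin

definition upper_covers :: "('a, 'b) gorder_scheme \<Rightarrow> 'a \<Rightarrow> 'a \<Rightarrow> bool" where
  "upper_covers P x y \<longleftrightarrow> x \<in> carrier P \<and> y \<in> carrier P \<and>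
     y \<sqsubseteq>\<^bsub>P\<^esub> x \<and> y \<noteq> x \<and>
     \<not> (\<exists>z \<in> carrier P. y \<sqsubseteq>\<^bsub>P\<^esub> z \<and> y \<noteq> z \<and> z \<sqsubseteq>\<^bsub>P\<^esub> x \<and> z \<noteq> x)"

definition join_irreducible :: "('a, 'b) gorder_scheme \<Rightarrow> 'a \<Rightarrow> bool" where
  "join_irreducible P x \<longleftrightarrow> x \<in> carrier P \<and> (\<exists>!y. upper_covers P x y)"

definition meet_irreducible :: "('a, 'b) gorder_scheme \<Rightarrow> 'a \<Rightarrow> bool" where
  "meet_irreducible P x \<longleftrightarrow> x \<in> carrier P \<and> (\<exists>!y. upper_covers P y x)"

definition doubly_irreducible :: "('a, 'b) gorder_scheme \<Rightarrow> 'a \<Rightarrow> bool" where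
  "doubly_irreducible P x \<longleftrightarrow> join_irreducible P x \<and> meet_irreducible P x"

definition up_set :: "('a, 'b) gorder_scheme \<Rightarrow> 'a \<Rightarrow> 'a set" where
  "up_set P x = {y \<in> carrier P. x \<sqsubseteq>\<^bsub>P\<^esub> y}"

definition counterexample :: "('a, 'b) gorder_scheme \<Rightarrow> bool" where
  "counterexample L \<longleftrightarrow> lattice L \<and> finite (carrier L) \<and> card (carrier L) > 1 \<and>
     (\<forall>j. join_irreducible L j \<longrightarrow> 2 * card (up_set L j) > card (carrier L))"

text \<open>Minimality is over all lattices on the same element type; since any
  smaller lattice can be transported onto a subset of the carrier, this is
  equivalent to minimality over all finite lattices.\<close>
definition min_counterexample :: "'a gorder \<Rightarrow> bool" where
  "min_counterexample L \<longleftrightarrow> counterexample L \<and>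
     (\<forall>L' :: 'a gorder. counterexample L' \<longrightarrow> card (carrier L) \<le> card (carrier L'))"

end

theory Submission
  imports Defs
begin

text \<open>Removing doubly irreducible elements from a finite lattice leaves a lattice, since a
  join-irreducible (meet-irreducible) element is never the join (meet) of two elements other
  than itself; the new join-irreducibles are old ones or upper covers of removed elements.
  Given distinct doubly irreducible a and b, remove a if a < b, and both if they are
  incomparable. An old join-irreducible below a removed s still has at least |\<up>s| elements
  above it, and the unique upper cover of a removed s lies below b in the first case and
  above all of \<up>s - {s} in the second. Counting then shows that the smaller lattice is again
  a counterexample, contradicting minimality.\<close>

lemma upper_covers_inv_gorder [simp]:
  "upper_covers (inv_gorder L) x y \<longleftrightarrow> upper_covers L y x"
  by (auto simp: upper_covers_def)

lemma join_irreducible_inv_gorder [simp]: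
  "join_irreducible (inv_gorder L) x \<longleftrightarrow> meet_irreducible L x"
  by (simp add: join_irreducible_def meet_irreducible_def)

lemma up_set_remove [simp]:
  "up_set (L\<lparr>carrier := carrier L - S\<rparr>) x = up_set L x - S"
  by (auto simp: up_set_def)

lemma finite_up_set:
  "finite (carrier L) \<Longrightarrow> finite (up_set L x)"
  by (simp add: up_set_def)

lemma (in partial_order) finite_has_maximal:
  assumes "finite A" "A \<noteq> {}" "A \<subseteq> carrier L"
  shows "\<exists>m\<in>A. \<forall>b\<in>A. m \<sqsubseteq> b \<longrightarrow> b = m"
  using assms
proof (induction A rule: finite_ne_induct)
  case (insert x F)
  then obtain m where m: "m \<in> F" "\<forall>b\<in>F. m \<sqsubseteq> b \<longrightarrow> b = m" by auto
  show ?case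
  proof (cases "m \<sqsubseteq> x")
    case True
    have "b = x" if b: "b \<in> F" "x \<sqsubseteq> b" for b
    proof -
      have carr: "m \<in> carrier L" "x \<in> carrier L" "b \<in> carrier L"
        using insert.prems m b by auto
      have "b = m" using m b True le_trans[OF True b(2)] carr by auto
      then show ?thesis using True b(2) carr le_antisym by auto
    qed
    then show ?thesis by auto
  next
    case False
    then show ?thesis using m by auto
  qed
qed auto

lemma (in partial_order) lower_cover_exists:
  assumes "finite (carrier L)" "x \<in> carrier L" "a \<in> carrier L" "x \<sqsubseteq> a" "x \<noteq> a"
  shows "\<exists>c. upper_covers L a c \<and> x \<sqsubseteq> c"
proof -
  let ?T = "{z \<in> carrier L. x \<sqsubseteq> z \<and> z \<sqsubseteq> a \<and> z \<noteq> a}"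
  obtain c where c: "c \<in> ?T" and max: "\<forall>z\<in>?T. c \<sqsubseteq> z \<longrightarrow> z = c"
    using finite_has_maximal[of ?T] assms by auto
  have "upper_covers L a c"
    unfolding upper_covers_def using c max assms(2,3) by (auto dest: le_trans)
  then show ?thesis using c by auto
qed

lemma (in partial_order) upper_cover_exists:
  assumes "finite (carrier L)" "y \<in> carrier L" "a \<in> carrier L" "a \<sqsubseteq> y" "a \<noteq> y"
  shows "\<exists>c. upper_covers L c a \<and> c \<sqsubseteq> y"
  using partial_order.lower_cover_exists[OF dual_order, of y a] assms by auto

lemma (in lattice) join_irreducible_join:
  assumes fin: "finite (carrier L)" and x: "x \<in> carrier L" and y: "y \<in> carrier L"
    and ji: "join_irreducible L (x \<squnion> y)"
  shows "x \<squnion> y = x \<or> x \<squnion> y = y"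
proof (rule ccontr)
  assume "\<not> (x \<squnion> y = x \<or> x \<squnion> y = y)"
  then have nx: "x \<noteq> x \<squnion> y" and ny: "y \<noteq> x \<squnion> y" by auto
  have s: "x \<squnion> y \<in> carrier L" using x y by simp
  obtain c where cover: "\<And>d. upper_covers L (x \<squnion> y) d \<longleftrightarrow> d = c"
    using ji unfolding join_irreducible_def by blast
  obtain cx where "upper_covers L (x \<squnion> y) cx" "x \<sqsubseteq> cx"
    using lower_cover_exists[OF fin x s join_left[OF x y] nx] by blast
  moreover obtain cy where "upper_covers L (x \<squnion> y) cy" "y \<sqsubseteq> cy"
    using lower_cover_exists[OF fin y s join_right[OF x y] ny] by blast
  ultimately have c: "upper_covers L (x \<squnion> y) c" "x \<sqsubseteq> c" "y \<sqsubseteq> c"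
    using cover by auto
  then have "c \<in> carrier L" "c \<sqsubseteq> x \<squnion> y" "c \<noteq> x \<squnion> y"
    unfolding upper_covers_def by auto
  moreover have "x \<squnion> y \<sqsubseteq> c" using c(2,3) x y \<open>c \<in> carrier L\<close> by (rule join_le)
  ultimately show False using s le_antisym by blast
qed

lemma (in lattice) meet_irreducible_meet:
  assumes "finite (carrier L)" "x \<in> carrier L" "y \<in> carrier L"
    and "meet_irreducible L (x \<sqinter> y)"
  shows "x \<sqinter> y = x \<or> x \<sqinter> y = y"
  using lattice.join_irreducible_join[OF dual_lattice, of x y] assms by simp

lemma (in lattice) lattice_restrict:
  assumes A: "A \<subseteq> carrier L"
    and join_closed: "\<And>x y. x \<in> A \<Longrightarrow> y \<in> A \<Longrightarrow> x \<squnion> y \<in> A"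
    and meet_closed: "\<And>x y. x \<in> A \<Longrightarrow> y \<in> A \<Longrightarrow> x \<sqinter> y \<in> A"
  shows "lattice (L\<lparr>carrier := A\<rparr>)"
proof -
  interpret R: partial_order "L\<lparr>carrier := A\<rparr>"
    using A by unfold_locales (auto simp: eq_is_equal intro: le_antisym le_trans)
  show ?thesis
  proof unfold_locales
    fix x y assume "x \<in> carrier (L\<lparr>carrier := A\<rparr>)" "y \<in> carrier (L\<lparr>carrier := A\<rparr>)"
    then have xy: "x \<in> A" "y \<in> A" "x \<in> carrier L" "y \<in> carrier L" using A by auto
    have "least (L\<lparr>carrier := A\<rparr>) (x \<squnion> y) (Upper (L\<lparr>carrier := A\<rparr>) {x, y})"
      using xy join_closed[OF xy(1,2)] A
      by (auto simp: least_def Upper_def intro: join_le join_left join_right)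
    then show "\<exists>s. least (L\<lparr>carrier := A\<rparr>) s (Upper (L\<lparr>carrier := A\<rparr>) {x, y})" ..
    have "greatest (L\<lparr>carrier := A\<rparr>) (x \<sqinter> y) (Lower (L\<lparr>carrier := A\<rparr>) {x, y})"
      using xy meet_closed[OF xy(1,2)] A
      by (auto simp: greatest_def Lower_def intro: meet_le meet_left meet_right)
    then show "\<exists>s. greatest (L\<lparr>carrier := A\<rparr>) s (Lower (L\<lparr>carrier := A\<rparr>) {x, y})" ..
  qed
qed

lemma (in lattice) lattice_remove_doubly_irreducible:
  assumes fin: "finite (carrier L)" and S: "\<forall>s\<in>S. doubly_irreducible L s"
  shows "lattice (L\<lparr>carrier := carrier L - S\<rparr>)"
proof (rule lattice_restrict)
  fix x y assume x: "x \<in> carrier L - S" and y: "y \<in> carrier L - S"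
  show "x \<squnion> y \<in> carrier L - S"
    using x y S join_irreducible_join[OF fin, of x y]
    by (auto simp: doubly_irreducible_def)
  show "x \<sqinter> y \<in> carrier L - S"
    using x y S meet_irreducible_meet[OF fin, of x y]
    by (auto simp: doubly_irreducible_def)
qed auto

lemma (in partial_order) join_irreducible_remove:
  assumes fin: "finite (carrier L)"
    and ji: "join_irreducible (L\<lparr>carrier := carrier L - S\<rparr>) j"
  shows "join_irreducible L j \<or> (\<exists>s\<in>S. upper_covers L j s)"
proof (rule disjCI)
  assume no_cover: "\<not> (\<exists>s\<in>S. upper_covers L j s)"
  have j: "j \<in> carrier L" using ji unfolding join_irreducible_def by simp
  obtain c where c: "upper_covers (L\<lparr>carrier := carrier L - S\<rparr>) j c"
    and unique: "\<And>d. upper_covers (L\<lparr>carrier := carrier L - S\<rparr>) j d \<Longrightarrow> d = c"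
    using ji unfolding join_irreducible_def by blast
  have "c \<in> carrier L" "c \<sqsubseteq> j" "c \<noteq> j" using c unfolding upper_covers_def by auto
  then obtain d where d: "upper_covers L j d" using lower_cover_exists[OF fin _ j] by blast
  have "upper_covers (L\<lparr>carrier := carrier L - S\<rparr>) j e" if "upper_covers L j e" for e
    using that no_cover ji unfolding upper_covers_def join_irreducible_def by auto
  then have "upper_covers L j = (\<lambda>e. e = d)"
    using unique d by metis
  then show "join_irreducible L j" unfolding join_irreducible_def using j by simp
qed

lemma (in partial_order) meet_irreducible_cover_le:
  assumes fin: "finite (carrier L)" and mi: "meet_irreducible L a" and ja: "upper_covers L j a"
    and y: "y \<in> carrier L" "a \<sqsubseteq> y" "a \<noteq> y"
  shows "j \<sqsubseteq> y"
proof -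
  have "a \<in> carrier L" using ja unfolding upper_covers_def by simp
  then obtain c where "upper_covers L c a" "c \<sqsubseteq> y" using upper_cover_exists[OF fin y(1) _ y(2,3)] by blast
  moreover have "c = j" using mi ja \<open>upper_covers L c a\<close> unfolding meet_irreducible_def by blast
  ultimately show ?thesis by simp
qed

lemma (in partial_order) card_up_set_le_remove:
  assumes fin: "finite (carrier L)" and s: "s \<in> S" "s \<in> carrier L"
    and only_s: "up_set L s \<inter> S \<subseteq> {s}"
    and j: "j \<in> carrier L" "j \<notin> S" "j \<sqsubseteq> s"
  shows "card (up_set L s) \<le> card (up_set L j - S)"
proof -
  have "s \<in> up_set L s" "j \<notin> up_set L s - {s}"
    using s j le_antisym unfolding up_set_def by auto
  then have "card (up_set L s) = card (insert j (up_set L s - {s}))"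
    using finite_up_set[OF fin] by (metis card_Suc_Diff1 card_insert_disjoint finite_Diff)
  also have "\<dots> \<le> card (up_set L j - S)"
    using s j only_s finite_up_set[OF fin]
    by (intro card_mono) (auto simp: up_set_def intro: le_trans)
  finally show ?thesis .
qed

lemma (in lattice) counterexample_remove_antichain:
  assumes ce: "counterexample L"
    and S: "\<forall>s\<in>S. doubly_irreducible L s"
    and antichain: "\<And>s t. s \<in> S \<Longrightarrow> t \<in> S \<Longrightarrow> s \<sqsubseteq> t \<Longrightarrow> s = t"
    and size: "1 < card (carrier L - S)"
    and covers: "\<And>s j. s \<in> S \<Longrightarrow> upper_covers L j s \<Longrightarrow> j \<notin> S \<Longrightarrow>
                   card (carrier L - S) < 2 * card (up_set L j - S)"
  shows "counterexample (L\<lparr>carrier := carrier L - S\<rparr>)"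
  unfolding counterexample_def
proof (intro conjI allI impI)
  have fin: "finite (carrier L)"
    and large_up: "\<And>j. join_irreducible L j \<Longrightarrow> card (carrier L) < 2 * card (up_set L j)"
    using ce unfolding counterexample_def by auto
  have shrink: "card (carrier L - S) \<le> card (carrier L)"
    using fin by (simp add: card_mono)
  show "lattice (L\<lparr>carrier := carrier L - S\<rparr>)"
    using lattice_remove_doubly_irreducible[OF fin S] .
  show "finite (carrier (L\<lparr>carrier := carrier L - S\<rparr>))" using fin by simp
  show "1 < card (carrier (L\<lparr>carrier := carrier L - S\<rparr>))" using size by simp
  fix j assume ji: "join_irreducible (L\<lparr>carrier := carrier L - S\<rparr>) j"
  then have j: "j \<in> carrier L" "j \<notin> S" unfolding join_irreducible_def by auto
  have "card (carrier L - S) < 2 * card (up_set L j - S)"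
    using join_irreducible_remove[OF fin ji]
  proof
    assume ji_L: "join_irreducible L j"
    show ?thesis
    proof (cases "\<exists>s\<in>S. j \<sqsubseteq> s")
      case True
      then obtain s where s: "s \<in> S" "j \<sqsubseteq> s" by blast
      have s_carrier: "s \<in> carrier L" and "join_irreducible L s"
        using S s(1) unfolding doubly_irreducible_def join_irreducible_def by auto
      moreover have "up_set L s \<inter> S \<subseteq> {s}"
        using antichain s(1) unfolding up_set_def by auto
      ultimately have "card (up_set L s) \<le> card (up_set L j - S)"
        using card_up_set_le_remove[OF fin s(1)] j s(2) by blast
      with large_up[OF \<open>join_irreducible L s\<close>] shrink show ?thesis by linarith
    next
      case False
      then have "up_set L j - S = up_set L j" unfolding up_set_def by auto
      with large_up[OF ji_L] shrink show ?thesis by simp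
    qed
  qed (use covers j in blast)
  then show "card (carrier (L\<lparr>carrier := carrier L - S\<rparr>))
      < 2 * card (up_set (L\<lparr>carrier := carrier L - S\<rparr>) j)" by simp
qed

lemma (in lattice) counterexample_remove_below:
  assumes ce: "counterexample L"
    and a: "doubly_irreducible L a" and b: "doubly_irreducible L b"
    and ab: "a \<sqsubseteq> b" "a \<noteq> b"
  shows "counterexample (L\<lparr>carrier := carrier L - {a}\<rparr>)"
proof (rule counterexample_remove_antichain[OF ce])
  have fin: "finite (carrier L)"
    and large_up: "\<And>j. join_irreducible L j \<Longrightarrow> card (carrier L) < 2 * card (up_set L j)"
    using ce unfolding counterexample_def by auto
  have a_carrier: "a \<in> carrier L" and b_carrier: "b \<in> carrier L"
    using a b unfolding doubly_irreducible_def join_irreducible_def by auto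
  show "\<forall>s\<in>{a}. doubly_irreducible L s" using a by simp
  obtain c where "upper_covers L a c"
    using a unfolding doubly_irreducible_def join_irreducible_def by blast
  then have "c \<in> carrier L" "c \<sqsubseteq> a" "c \<noteq> a" unfolding upper_covers_def by auto
  then have "{b, c} \<subseteq> carrier L - {a}" "c \<noteq> b"
    using ab a_carrier b_carrier le_antisym by auto
  then have "card {b, c} \<le> card (carrier L - {a})" using fin by (intro card_mono) auto
  then show "1 < card (carrier L - {a})" using \<open>c \<noteq> b\<close> by simp
  fix s j assume "s \<in> {a}" and j: "upper_covers L j s" "j \<notin> {a}"
  then have "j \<sqsubseteq> b"
    using meet_irreducible_cover_le[OF fin _ _ b_carrier ab] a
    by (auto simp: doubly_irreducible_def)
  then have "up_set L b \<subseteq> up_set L j - {a}"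
    using j ab a_carrier b_carrier le_antisym
    unfolding up_set_def upper_covers_def by (auto intro: le_trans)
  then have "card (up_set L b) \<le> card (up_set L j - {a})"
    using finite_up_set[OF fin] by (intro card_mono) auto
  moreover have "card (carrier L) < 2 * card (up_set L b)"
    using large_up b unfolding doubly_irreducible_def by blast
  ultimately show "card (carrier L - {a}) < 2 * card (up_set L j - {a})"
    using fin a_carrier by simp
qed auto

lemma (in lattice) counterexample_remove_incomparable:
  assumes ce: "counterexample L"
    and a: "doubly_irreducible L a" and b: "doubly_irreducible L b"
    and incomparable: "\<not> a \<sqsubseteq> b" "\<not> b \<sqsubseteq> a"
  shows "counterexample (L\<lparr>carrier := carrier L - {a, b}\<rparr>)"
proof (rule counterexample_remove_antichain[OF ce])
  have fin: "finite (carrier L)"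
    and large_up: "\<And>j. join_irreducible L j \<Longrightarrow> card (carrier L) < 2 * card (up_set L j)"
    using ce unfolding counterexample_def by auto
  have a_carrier: "a \<in> carrier L" and b_carrier: "b \<in> carrier L"
    using a b unfolding doubly_irreducible_def join_irreducible_def by auto
  moreover have "a \<noteq> b" using incomparable a_carrier by auto
  ultimately have card_remove: "card (carrier L - {a, b}) = card (carrier L) - 2"
    using fin by (simp add: card_Diff_subset)
  show "\<forall>s\<in>{a, b}. doubly_irreducible L s" using a b by simp
  show "\<And>s t. s \<in> {a, b} \<Longrightarrow> t \<in> {a, b} \<Longrightarrow> s \<sqsubseteq> t \<Longrightarrow> s = t"
    using incomparable by auto
  have bounds: "a \<sqsubseteq> a \<squnion> b" "b \<sqsubseteq> a \<squnion> b" "a \<sqinter> b \<sqsubseteq> a" "a \<sqinter> b \<sqsubseteq> b"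
    using a_carrier b_carrier by (simp_all add: join_left join_right meet_left meet_right)
  then have join_neq_meet: "a \<squnion> b \<noteq> a \<sqinter> b"
    using a_carrier b_carrier incomparable le_trans[of a "a \<sqinter> b" b] by auto
  have "{a \<squnion> b, a \<sqinter> b} \<subseteq> carrier L - {a, b}"
    using bounds a_carrier b_carrier incomparable by auto
  then have "card {a \<squnion> b, a \<sqinter> b} \<le> card (carrier L - {a, b})"
    using fin by (intro card_mono) auto
  then show size: "1 < card (carrier L - {a, b})" using join_neq_meet by simp
  fix s j assume s: "s \<in> {a, b}" and j: "upper_covers L j s" "j \<notin> {a, b}"
  have s_di: "doubly_irreducible L s" "s \<in> carrier L" using s a b a_carrier b_carrier by auto
  have "up_set L s - {s} \<subseteq> up_set L j - {a, b}"
    using meet_irreducible_cover_le[OF fin _ j(1)] s_di s incomparable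
    unfolding up_set_def doubly_irreducible_def by auto
  then have "card (up_set L s - {s}) \<le> card (up_set L j - {a, b})"
    using finite_up_set[OF fin] by (intro card_mono) auto
  moreover have "card (up_set L s - {s}) = card (up_set L s) - 1"
    using s_di by (simp add: up_set_def)
  moreover have "card (carrier L) < 2 * card (up_set L s)"
    using large_up s_di unfolding doubly_irreducible_def by blast
  ultimately show "card (carrier L - {a, b}) < 2 * card (up_set L j - {a, b})"
    using size unfolding card_remove by linarith
qed

lemma (in lattice) smaller_counterexample:
  assumes ce: "counterexample L"
    and a: "doubly_irreducible L a" and b: "doubly_irreducible L b" and "a \<noteq> b"
  shows "\<exists>S. S \<noteq> {} \<and> S \<subseteq> carrier L \<and> counterexample (L\<lparr>carrier := carrier L - S\<rparr>)"
proof -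
  have "a \<in> carrier L" "b \<in> carrier L"
    using a b unfolding doubly_irreducible_def join_irreducible_def by auto
  consider "a \<sqsubseteq> b" | "b \<sqsubseteq> a" | "\<not> a \<sqsubseteq> b" "\<not> b \<sqsubseteq> a" by blast
  then show ?thesis
  proof cases
    case 1
    with counterexample_remove_below[OF ce a b] \<open>a \<noteq> b\<close>
    have "counterexample (L\<lparr>carrier := carrier L - {a}\<rparr>)" by simp
    then show ?thesis using \<open>a \<in> carrier L\<close> by (intro exI[of _ "{a}"]) simp
  next
    case 2
    with counterexample_remove_below[OF ce b a] \<open>a \<noteq> b\<close>
    have "counterexample (L\<lparr>carrier := carrier L - {b}\<rparr>)" by simp
    then show ?thesis using \<open>b \<in> carrier L\<close> by (intro exI[of _ "{b}"]) simp
  next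
    case 3
    with counterexample_remove_incomparable[OF ce a b]
    have "counterexample (L\<lparr>carrier := carrier L - {a, b}\<rparr>)" by simp
    then show ?thesis using \<open>a \<in> carrier L\<close> \<open>b \<in> carrier L\<close> by (intro exI[of _ "{a, b}"]) simp
  qed
qed

theorem theorem2p6:
  fixes L :: "'a gorder"
  assumes "min_counterexample L"
  shows "card {x \<in> carrier L. doubly_irreducible L x} \<le> 1"
proof (rule ccontr)
  have ce: "counterexample L"
    and minimal: "\<And>L' :: 'a gorder. counterexample L' \<Longrightarrow> card (carrier L) \<le> card (carrier L')"
    using assms unfolding min_counterexample_def by auto
  then interpret lattice L unfolding counterexample_def by simp
  have fin: "finite (carrier L)" using ce unfolding counterexample_def by simp
  assume "\<not> card {x \<in> carrier L. doubly_irreducible L x} \<le> 1"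
  then obtain a b where a: "doubly_irreducible L a" and b: "doubly_irreducible L b" and "a \<noteq> b"
    using fin by (auto simp: card_le_Suc0_iff_eq)
  obtain S where S: "S \<noteq> {}" "S \<subseteq> carrier L"
    and smaller: "counterexample (L\<lparr>carrier := carrier L - S\<rparr>)"
    using smaller_counterexample[OF ce a b \<open>a \<noteq> b\<close>] by blast
  have "card (carrier L - S) < card (carrier L)"
    using fin S by (intro psubset_card_mono) auto
  with minimal[OF smaller] show False by simp
qed

end
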